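(* Let $L$ be a finite-dimensional simple regular Lie algebra of rank $1$ over an infinite field $K$, admitting a nondegenerate symmetric invariant bilinear form. Then every element of $L$ is a commutator, i.e. for every $x\in L$ there exist $y,z\in L$ with $x=[y,z]$.
   Context: For $x\in L$ write $\chi_{\operatorname{ad} x}(t)=\det(t-\operatorname{ad}x)=\sum_{i}a_i(x)t^i$; the rank $\operatorname{rk}L$ is the minimal $r$ with $a_r(x)\neq0$ for some $x$; $x$ is regular if $a_{\operatorname{rk}L}(x)\neq 0$; $L$ is regular if every nonzero element is regular. A bilinear form is invariant if $\langle[x,y],z\rangle=\langle x,[y,z]\rangle$ for all $x,y,z$. *)

theory Defs
  imports "Jordan_Normal_Form.Char_Poly"
begin

text \<open>A finite-dimensional Lie algebra over a field K is modelled (up to isomorphism)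
 as K^n = carrier_vec n together with a bracket br.\<close>

definition lie_algebra :: "nat \<Rightarrow> ('k::field vec \<Rightarrow> 'k vec \<Rightarrow> 'k vec) \<Rightarrow> bool" where
  "lie_algebra n br \<longleftrightarrow>
    (\<forall>x\<in>carrier_vec n. \<forall>y\<in>carrier_vec n. br x y \<in> carrier_vec n) \<and>
    (\<forall>a. \<forall>x\<in>carrier_vec n. \<forall>y\<in>carrier_vec n. \<forall>z\<in>carrier_vec n.
        br (a \<cdot>\<^sub>v x + y) z = a \<cdot>\<^sub>v br x z + br y z \<and>
        br z (a \<cdot>\<^sub>v x + y) = a \<cdot>\<^sub>v br z x + br z y) \<and>
    (\<forall>x\<in>carrier_vec n. br x x = 0\<^sub>v n) \<and>
    (\<forall>x\<in>carrier_vec n. \<forall>y\<in>carrier_vec n. \<forall>z\<in>carrier_vec n.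
        br x (br y z) + br y (br z x) + br z (br x y) = 0\<^sub>v n)"

definition lie_ideal :: "nat \<Rightarrow> ('k::field vec \<Rightarrow> 'k vec \<Rightarrow> 'k vec) \<Rightarrow> 'k vec set \<Rightarrow> bool" where
  "lie_ideal n br I \<longleftrightarrow> I \<subseteq> carrier_vec n \<and> 0\<^sub>v n \<in> I \<and>
    (\<forall>x\<in>I. \<forall>y\<in>I. x + y \<in> I) \<and> (\<forall>a. \<forall>x\<in>I. a \<cdot>\<^sub>v x \<in> I) \<and>
    (\<forall>x\<in>carrier_vec n. \<forall>y\<in>I. br x y \<in> I)"

definition simple_lie :: "nat \<Rightarrow> ('k::field vec \<Rightarrow> 'k vec \<Rightarrow> 'k vec) \<Rightarrow> bool" where
  "simple_lie n br \<longleftrightarrow> lie_algebra n br \<and>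
    (\<exists>x\<in>carrier_vec n. \<exists>y\<in>carrier_vec n. br x y \<noteq> 0\<^sub>v n) \<and>
    (\<forall>I. lie_ideal n br I \<longrightarrow> I = {0\<^sub>v n} \<or> I = carrier_vec n)"

definition ad_mat :: "nat \<Rightarrow> ('k::field vec \<Rightarrow> 'k vec \<Rightarrow> 'k vec) \<Rightarrow> 'k vec \<Rightarrow> 'k mat" where
  "ad_mat n br x = mat n n (\<lambda>(i,j). br x (unit_vec n j) $ i)"

definition ad_char_poly :: "nat \<Rightarrow> ('k::field vec \<Rightarrow> 'k vec \<Rightarrow> 'k vec) \<Rightarrow> 'k vec \<Rightarrow> 'k poly" where
  "ad_char_poly n br x = char_poly (ad_mat n br x)"

definition lie_rank :: "nat \<Rightarrow> ('k::field vec \<Rightarrow> 'k vec \<Rightarrow> 'k vec) \<Rightarrow> nat" where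
  "lie_rank n br = (LEAST r. \<exists>x\<in>carrier_vec n. coeff (ad_char_poly n br x) r \<noteq> 0)"

definition regular_elem :: "nat \<Rightarrow> ('k::field vec \<Rightarrow> 'k vec \<Rightarrow> 'k vec) \<Rightarrow> 'k vec \<Rightarrow> bool" where
  "regular_elem n br x \<longleftrightarrow> coeff (ad_char_poly n br x) (lie_rank n br) \<noteq> 0"

definition regular_lie :: "nat \<Rightarrow> ('k::field vec \<Rightarrow> 'k vec \<Rightarrow> 'k vec) \<Rightarrow> bool" where
  "regular_lie n br \<longleftrightarrow> (\<forall>x\<in>carrier_vec n. x \<noteq> 0\<^sub>v n \<longrightarrow> regular_elem n br x)"

definition nondeg_sym_invariant_form ::
  "nat \<Rightarrow> ('k::field vec \<Rightarrow> 'k vec \<Rightarrow> 'k vec) \<Rightarrow> ('k vec \<Rightarrow> 'k vec \<Rightarrow> 'k) \<Rightarrow> bool" where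
  "nondeg_sym_invariant_form n br B \<longleftrightarrow>
    (\<forall>a. \<forall>x\<in>carrier_vec n. \<forall>y\<in>carrier_vec n. \<forall>z\<in>carrier_vec n.
        B (a \<cdot>\<^sub>v x + y) z = a * B x z + B y z \<and>
        B z (a \<cdot>\<^sub>v x + y) = a * B z x + B z y) \<and>
    (\<forall>x\<in>carrier_vec n. \<forall>y\<in>carrier_vec n. B x y = B y x) \<and>
    (\<forall>x\<in>carrier_vec n. \<forall>y\<in>carrier_vec n. \<forall>z\<in>carrier_vec n. B (br x y) z = B x (br y z)) \<and>
    (\<forall>x\<in>carrier_vec n. (\<forall>y\<in>carrier_vec n. B x y = 0) \<longrightarrow> x = 0\<^sub>v n)"

end

theory Submission
  imports Defs
begin

text \<open>Choose y \<noteq> 0 orthogonal to x. As L has rank 1 and y is regular, the coefficient of t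
  in the characteristic polynomial \<chi> of ad y is nonzero. Since \<chi>'(0) is the sum of the
  characteristic polynomials of the principal (n-1)-submatrices at 0, one of these submatrices is
  invertible: the image of ad y together with one basis vector e spans L. Invariance gives
  \<langle>y,[y,z]\<rangle> = \<langle>[y,y],z\<rangle> = 0, so this image lies in the hyperplane H orthogonal to y,
  whence e \<notin> H and the image is all of H, which contains x.\<close>

definition linear_form :: "nat \<Rightarrow> ('k::field vec \<Rightarrow> 'k) \<Rightarrow> bool" where
  "linear_form n f \<longleftrightarrow>
    (\<forall>a. \<forall>u\<in>carrier_vec n. \<forall>v\<in>carrier_vec n. f (a \<cdot>\<^sub>v u + v) = a * f u + f v)"

definition linear_vec_map :: "nat \<Rightarrow> nat \<Rightarrow> ('k::field vec \<Rightarrow> 'k vec) \<Rightarrow> bool" where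
  "linear_vec_map n m F \<longleftrightarrow> (\<forall>u\<in>carrier_vec n. F u \<in> carrier_vec m) \<and>
    (\<forall>a. \<forall>u\<in>carrier_vec n. \<forall>v\<in>carrier_vec n. F (a \<cdot>\<^sub>v u + v) = a \<cdot>\<^sub>v F u + F v)"

lemma linear_form_zero:
  assumes "linear_form n f"
  shows "f (0\<^sub>v n) = 0"
proof -
  have "f (0\<^sub>v n) = f (0\<^sub>v n) + f (0\<^sub>v n)"
    using assms[unfolded linear_form_def, rule_format, where a=1 and u="0\<^sub>v n" and v="0\<^sub>v n"] by simp
  then show ?thesis by (metis add_cancel_right_right)
qed

lemma linear_form_smult:
  assumes "linear_form n f" and "u \<in> carrier_vec n"
  shows "f (a \<cdot>\<^sub>v u) = a * f u"
  using assms linear_form_zero[OF assms(1)] unfolding linear_form_def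
  by (metis right_zero_vec smult_carrier_vec zero_carrier_vec add.right_neutral)

lemma linear_form_kernel_nontrivial:
  assumes f: "linear_form n f" and n: "2 \<le> n"
  shows "\<exists>y\<in>carrier_vec n. y \<noteq> 0\<^sub>v n \<and> f y = 0"
proof (cases "f (unit_vec n 0) = 0")
  case True
  moreover have "unit_vec n 0 \<noteq> (0\<^sub>v n :: 'a vec)"
    using n by (metis index_unit_vec(1) index_zero_vec(1) less_le_trans pos2 zero_neq_one)
  ultimately show ?thesis by (metis unit_vec_carrier)
next
  case False
  define y where "y = f (unit_vec n 1) \<cdot>\<^sub>v unit_vec n 0 + (- f (unit_vec n 0)) \<cdot>\<^sub>v unit_vec n 1"
  have "f y = 0"
    using f linear_form_smult[OF f] unfolding y_def linear_form_def by simp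
  moreover have "y \<noteq> 0\<^sub>v n"
  proof
    assume "y = 0\<^sub>v n"
    then have "y $ 1 = 0" using n by simp
    then show False using n False unfolding y_def by simp
  qed
  moreover have "y \<in> carrier_vec n" unfolding y_def by simp
  ultimately show ?thesis by blast
qed

lemma linear_vec_map_zero:
  assumes F: "linear_vec_map n m F"
  shows "F (0\<^sub>v n) = 0\<^sub>v m"
proof -
  have c: "F (0\<^sub>v n) \<in> carrier_vec m" using F unfolding linear_vec_map_def by simp
  have "F (0\<^sub>v n) = F (0\<^sub>v n) + F (0\<^sub>v n)"
    using F[unfolded linear_vec_map_def] c by (metis one_smult_vec right_zero_vec zero_carrier_vec)
  then show ?thesis
    using c by (intro eq_vecI) (auto, metis add_cancel_right_right carrier_vecD index_add_vec(1))
qed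

lemma linear_vec_map_coordinate:
  assumes F: "linear_vec_map n m F" and z: "z \<in> carrier_vec n" and j: "j < m"
  shows "F z $ j = (\<Sum>l<n. F (unit_vec n l) $ j * z $ l)"
proof -
  have closed: "\<And>u. u \<in> carrier_vec n \<Longrightarrow> F u \<in> carrier_vec m"
    and lin: "\<And>a u v. u \<in> carrier_vec n \<Longrightarrow> v \<in> carrier_vec n \<Longrightarrow> F (a \<cdot>\<^sub>v u + v) = a \<cdot>\<^sub>v F u + F v"
    using F unfolding linear_vec_map_def by auto
  define zk where "zk k = vec n (\<lambda>l. if l < k then z $ l else 0)" for k
  have zkc: "zk k \<in> carrier_vec n" for k unfolding zk_def by simp
  have "F (zk k) $ j = (\<Sum>l<k. F (unit_vec n l) $ j * z $ l)" if "k \<le> n" for k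
    using that
  proof (induction k)
    case 0
    have "zk 0 = 0\<^sub>v n" unfolding zk_def by (auto simp: zero_vec_def)
    then show ?case using linear_vec_map_zero[OF F] j by simp
  next
    case (Suc k)
    have "zk (Suc k) = z $ k \<cdot>\<^sub>v unit_vec n k + zk k"
      using Suc.prems unfolding zk_def by (intro eq_vecI) (auto simp: less_Suc_eq)
    then have "F (zk (Suc k)) $ j = z $ k * F (unit_vec n k) $ j + F (zk k) $ j"
      using lin zkc closed[OF zkc[of k]] closed[of "unit_vec n k"] j by (simp add: carrier_vecD)
    then show ?case using Suc by (simp add: mult.commute)
  qed
  moreover have "zk n = z" unfolding zk_def using z by (intro eq_vecI) auto
  ultimately show ?thesis by (metis order_refl)
qed

lemma linear_vec_map_eq_mult_mat_vec:
  assumes F: "linear_vec_map n m F" and z: "z \<in> carrier_vec n"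
  shows "F z = mat m n (\<lambda>(i, j). F (unit_vec n j) $ i) *\<^sub>v z"
proof (rule eq_vecI)
  show "dim_vec (F z) = dim_vec (mat m n (\<lambda>(i, j). F (unit_vec n j) $ i) *\<^sub>v z)"
    using F z unfolding linear_vec_map_def by auto
next
  fix j assume "j < dim_vec (mat m n (\<lambda>(i, j). F (unit_vec n j) $ i) *\<^sub>v z)"
  then have j: "j < m" by simp
  show "F z $ j = (mat m n (\<lambda>(i, j). F (unit_vec n j) $ i) *\<^sub>v z) $ j"
    using linear_vec_map_coordinate[OF F z j] j z
    by (simp add: mult_mat_vec_def scalar_prod_def atLeast0LessThan row_def)
qed

lemma lie_algebra_linear_right:
  assumes "lie_algebra n br" and "y \<in> carrier_vec n"
  shows "linear_vec_map n n (br y)"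
  using assms unfolding lie_algebra_def linear_vec_map_def by blast

lemma lie_algebra_linear_left:
  assumes "lie_algebra n br" and "y \<in> carrier_vec n"
  shows "linear_vec_map n n (\<lambda>u. br u y)"
  using assms unfolding lie_algebra_def linear_vec_map_def by blast

lemma ad_mat_mult_vec:
  assumes "lie_algebra n br" and "y \<in> carrier_vec n" and "z \<in> carrier_vec n"
  shows "br y z = ad_mat n br y *\<^sub>v z"
  unfolding ad_mat_def
  using linear_vec_map_eq_mult_mat_vec[OF lie_algebra_linear_right[OF assms(1,2)] assms(3)] .

lemma lie_algebra_dim_le_1_abelian:
  assumes L: "lie_algebra n br" and n: "n \<le> 1"
    and p: "p \<in> carrier_vec n" and q: "q \<in> carrier_vec n"
  shows "br p q = 0\<^sub>v n"
proof (rule eq_vecI)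
  have pq: "br p q \<in> carrier_vec n" using L p q unfolding lie_algebra_def by blast
  then show "dim_vec (br p q) = dim_vec (0\<^sub>v n)" by simp
  fix j assume "j < dim_vec (0\<^sub>v n)"
  then have j: "j = 0" "n = 1" using n by auto
  let ?e = "unit_vec n 0"
  have "br p q $ 0 = br p ?e $ 0 * q $ 0"
    using linear_vec_map_coordinate[OF lie_algebra_linear_right[OF L p] q] j by simp
  also have "br p ?e $ 0 = br ?e ?e $ 0 * p $ 0"
    using linear_vec_map_coordinate[OF lie_algebra_linear_left[OF L unit_vec_carrier] p] j by simp
  also have "br ?e ?e = 0\<^sub>v n"
    using L unfolding lie_algebra_def by simp
  finally show "br p q $ j = 0\<^sub>v n $ j" using j by simp
qed

lemma simple_lie_dim_ge_2:
  assumes "simple_lie n br"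
  shows "2 \<le> n"
  using assms lie_algebra_dim_le_1_abelian unfolding simple_lie_def by fastforce

lemma det_zero_imp_char_poly_root_0:
  fixes M :: "'k::field mat"
  assumes M: "M \<in> carrier_mat n n" and "det M = 0"
  shows "poly (char_poly M) 0 = 0"
proof -
  have "- (M + 0 \<cdot>\<^sub>m 1\<^sub>m n) = (-1) \<cdot>\<^sub>m M"
    using M by (intro eq_matI) auto
  then show ?thesis
    using assms by (simp add: char_poly_matrix[OF M] char_matrix_def)
qed

lemma char_poly_coeff_1_nonzero_imp_principal_minor:
  fixes A :: "'k::field mat"
  assumes A: "A \<in> carrier_mat n n" and c: "coeff (char_poly A) 1 \<noteq> 0"
  shows "\<exists>i<n. det (mat_delete A i i) \<noteq> 0"
proof (rule ccontr)
  assume "\<not> ?thesis"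
  then have "poly (char_poly (mat_delete A i i)) 0 = 0" if "i < n" for i
    using that det_zero_imp_char_poly_root_0[OF mat_delete_carrier[OF A]] by blast
  then have "poly (pderiv (char_poly A)) 0 = 0"
    unfolding pderiv_char_poly[OF A] poly_sum by simp
  then show False
    using c by (simp add: poly_0_coeff_0 coeff_pderiv)
qed

lemma det_nonzero_imp_mult_mat_vec_solvable:
  fixes M :: "'k::field mat"
  assumes M: "M \<in> carrier_mat n n" and d: "det M \<noteq> 0" and v: "v \<in> carrier_vec n"
  shows "\<exists>z\<in>carrier_vec n. M *\<^sub>v z = v"
proof -
  have "M \<in> Units (ring_mat TYPE('k) n ())"
    using det_non_zero_imp_unit[OF M d] .
  then obtain N where "mat_inverse M = Some N"
    using mat_inverse(1)[OF M, of "()"] by (cases "mat_inverse M") auto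
  then have MN: "M * N = 1\<^sub>m n" and N: "N \<in> carrier_mat n n"
    using mat_inverse(2)[OF M] by auto
  have "M *\<^sub>v (N *\<^sub>v v) = v"
    using assoc_mult_mat_vec[OF M N v, symmetric] MN v by simp
  then show ?thesis using N v by (metis mult_mat_vec_carrier)
qed

lemma mult_mat_vec_insert_zero:
  fixes A :: "'k::field mat"
  assumes A: "A \<in> carrier_mat n n" and i: "i < n" and z: "z \<in> carrier_vec (n - 1)"
    and j: "j < n" "j \<noteq> i"
  shows "(A *\<^sub>v vec n (\<lambda>l. if l = i then 0 else z $ delete_index i l)) $ j
    = (mat_delete A i i *\<^sub>v z) $ delete_index i j"
proof -
  let ?z = "vec n (\<lambda>l. if l = i then 0 else z $ delete_index i l)"
  define k where "k = delete_index i j"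
  have jk: "insert_index i k = j" unfolding k_def using insert_delete_index[OF j(2)] .
  have k: "k < n - 1" unfolding k_def delete_index_def using j i by auto
  have img: "insert_index i ` {0..<n-1} = {0..<n} - {i}"
    using insert_index_image[of i "n-1"] i by simp
  have "(A *\<^sub>v ?z) $ j = (\<Sum>l\<in>{0..<n}. A $$ (j, l) * ?z $ l)"
    using A j by (simp add: mult_mat_vec_def scalar_prod_def row_def)
  also have "\<dots> = (\<Sum>l\<in>{0..<n} - {i}. A $$ (j, l) * ?z $ l)"
    using i by (intro sum.mono_neutral_right) auto
  also have "\<dots> = (\<Sum>m\<in>{0..<n-1}. A $$ (j, insert_index i m) * ?z $ insert_index i m)"
    unfolding img[symmetric] by (subst sum.reindex) (auto simp: insert_index_inj_on)
  also have "\<dots> = (\<Sum>m\<in>{0..<n-1}. mat_delete A i i $$ (k, m) * z $ m)"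
  proof (rule sum.cong[OF refl])
    fix m assume m: "m \<in> {0..<n-1}"
    then have "insert_index i m < n"
      using i unfolding insert_index_def by auto
    then have "?z $ insert_index i m = z $ m"
      by simp
    moreover have "mat_delete A i i $$ (k, m) = A $$ (j, insert_index i m)"
      unfolding mat_delete_def using A k m jk by (auto simp: insert_index_def)
    ultimately show "A $$ (j, insert_index i m) * ?z $ insert_index i m = mat_delete A i i $$ (k, m) * z $ m"
      by simp
  qed
  also have "\<dots> = (mat_delete A i i *\<^sub>v z) $ k"
    using A k z by (simp add: mult_mat_vec_def scalar_prod_def row_def)
  finally show ?thesis unfolding k_def .
qed

lemma principal_minor_nonzero_imp_onto_modulo_unit_vec:
  fixes A :: "'k::field mat"
  assumes A: "A \<in> carrier_mat n n" and i: "i < n"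
    and d: "det (mat_delete A i i) \<noteq> 0" and v: "v \<in> carrier_vec n"
  shows "\<exists>z\<in>carrier_vec n. \<exists>c. A *\<^sub>v z = c \<cdot>\<^sub>v unit_vec n i + v"
proof -
  obtain z' where z': "z' \<in> carrier_vec (n - 1)"
    and sol: "mat_delete A i i *\<^sub>v z' = vec (n - 1) (\<lambda>k. v $ insert_index i k)"
    using det_nonzero_imp_mult_mat_vec_solvable[OF mat_delete_carrier[OF A] d, of "vec (n - 1) _"]
    by auto
  define z where "z = vec n (\<lambda>l. if l = i then 0 else z' $ delete_index i l)"
  have "A *\<^sub>v z = ((A *\<^sub>v z) $ i - v $ i) \<cdot>\<^sub>v unit_vec n i + v"
  proof (rule eq_vecI)
    fix j assume "j < dim_vec (((A *\<^sub>v z) $ i - v $ i) \<cdot>\<^sub>v unit_vec n i + v)"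
    then have j: "j < n" using v by simp
    show "(A *\<^sub>v z) $ j = (((A *\<^sub>v z) $ i - v $ i) \<cdot>\<^sub>v unit_vec n i + v) $ j"
    proof (cases "j = i")
      case False
      have "delete_index i j < n - 1"
        unfolding delete_index_def using j i False by auto
      then show ?thesis
        using mult_mat_vec_insert_zero[OF A i z' j False] sol i j v False
        by (simp add: z_def insert_delete_index)
    qed (use v i in simp)
  qed (use A v in simp)
  then show ?thesis unfolding z_def by force
qed

lemma linear_form_kernel_subset_range:
  assumes f: "linear_form n f" and e: "e \<in> carrier_vec n"
    and range_in_kernel: "\<And>z. z \<in> carrier_vec n \<Longrightarrow> f (g z) = 0"
    and onto: "\<And>v. v \<in> carrier_vec n \<Longrightarrow> \<exists>z\<in>carrier_vec n. \<exists>c. g z = c \<cdot>\<^sub>v e + v"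
    and w: "w \<in> carrier_vec n" "f w \<noteq> 0"
    and x: "x \<in> carrier_vec n" "f x = 0"
  shows "\<exists>z\<in>carrier_vec n. g z = x"
proof -
  have decompose: "\<exists>z\<in>carrier_vec n. \<exists>c. g z = c \<cdot>\<^sub>v e + v \<and> c * f e + f v = 0"
    if v: "v \<in> carrier_vec n" for v
  proof -
    obtain z c where z: "z \<in> carrier_vec n" and gz: "g z = c \<cdot>\<^sub>v e + v"
      using onto[OF v] by blast
    have "c * f e + f v = f (g z)"
      using f e v unfolding gz linear_form_def by simp
    then show ?thesis using range_in_kernel[OF z] z gz by auto
  qed
  have "f e \<noteq> 0"
    using decompose[OF w(1)] w(2) by auto
  then obtain z where "z \<in> carrier_vec n" "g z = 0 \<cdot>\<^sub>v e + x"
    using decompose[OF x(1)] x(2) by auto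
  moreover have "0 \<cdot>\<^sub>v e + x = x"
    using e x(1) by (intro eq_vecI) auto
  ultimately show ?thesis by auto
qed

lemma nondeg_sym_invariant_form_linear_left:
  assumes "nondeg_sym_invariant_form n br B" and "x \<in> carrier_vec n"
  shows "linear_form n (\<lambda>u. B u x)"
  using assms unfolding nondeg_sym_invariant_form_def linear_form_def by blast

lemma nondeg_sym_invariant_form_linear_right:
  assumes "nondeg_sym_invariant_form n br B" and "y \<in> carrier_vec n"
  shows "linear_form n (B y)"
  using assms unfolding nondeg_sym_invariant_form_def linear_form_def by blast

lemma invariant_form_orthogonal_bracket:
  assumes L: "lie_algebra n br" and B: "nondeg_sym_invariant_form n br B"
    and y: "y \<in> carrier_vec n" and z: "z \<in> carrier_vec n"
  shows "B y (br y z) = 0"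
proof -
  have "B y (br y z) = B (br y y) z"
    using B y z unfolding nondeg_sym_invariant_form_def by simp
  also have "\<dots> = B (0\<^sub>v n) z"
    using L y unfolding lie_algebra_def by simp
  finally show ?thesis
    using linear_form_zero[OF nondeg_sym_invariant_form_linear_left[OF B z]] by simp
qed

theorem lemma12:
  fixes n :: nat and br :: "'k::field vec \<Rightarrow> 'k vec \<Rightarrow> 'k vec"
  assumes "infinite (UNIV :: 'k set)"
    and "simple_lie n br"
    and "regular_lie n br"
    and "lie_rank n br = 1"
    and "\<exists>B. nondeg_sym_invariant_form n br B"
  shows "\<forall>x\<in>carrier_vec n. \<exists>y\<in>carrier_vec n. \<exists>z\<in>carrier_vec n. x = br y z"
proof
  fix x :: "'k vec" assume x: "x \<in> carrier_vec n"
  obtain B where B: "nondeg_sym_invariant_form n br B" using assms(5) by blast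
  have L: "lie_algebra n br" using assms(2) unfolding simple_lie_def by simp
  obtain y where y: "y \<in> carrier_vec n" "y \<noteq> 0\<^sub>v n" and Byx: "B y x = 0"
    using linear_form_kernel_nontrivial[OF nondeg_sym_invariant_form_linear_left[OF B x]
        simple_lie_dim_ge_2[OF assms(2)]] by blast
  have ad: "ad_mat n br y \<in> carrier_mat n n" by (simp add: ad_mat_def)
  have "coeff (char_poly (ad_mat n br y)) 1 \<noteq> 0"
    using assms(3,4) y unfolding regular_lie_def regular_elem_def ad_char_poly_def by auto
  then obtain i where i: "i < n" "det (mat_delete (ad_mat n br y) i i) \<noteq> 0"
    using char_poly_coeff_1_nonzero_imp_principal_minor[OF ad] by blast
  obtain w where w: "w \<in> carrier_vec n" "B y w \<noteq> 0"
    using B y unfolding nondeg_sym_invariant_form_def by blast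
  have "\<exists>z\<in>carrier_vec n. br y z = x"
  proof (rule linear_form_kernel_subset_range[OF nondeg_sym_invariant_form_linear_right[OF B y(1)]
        unit_vec_carrier invariant_form_orthogonal_bracket[OF L B y(1)] _ w x Byx])
    fix v :: "'k vec" assume "v \<in> carrier_vec n"
    then show "\<exists>z\<in>carrier_vec n. \<exists>c. br y z = c \<cdot>\<^sub>v unit_vec n i + v"
      using principal_minor_nonzero_imp_onto_modulo_unit_vec[OF ad i] ad_mat_mult_vec[OF L y(1)]
      by simp
  qed
  then show "\<exists>y\<in>carrier_vec n. \<exists>z\<in>carrier_vec n. x = br y z" using y(1) by metis
qed

end
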